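(* Let $G$ be a finite simple graph, let $r \ge 1$, and let $H_1,\dots,H_r$ be Hamilton cycles in $G$ (viewed as spanning subgraphs on $V(G)$). Let $H = H_1\cup\dots\cup H_r$ be the spanning subgraph with edge set $E(H_1)\cup\dots\cup E(H_r)$, and let $G-H$ be the spanning subgraph of $G$ with edge set $E(G)\setminus E(H)$. Then $\widetilde{\alpha}(G-H) + 1 \le (r+1)(\widetilde{\alpha}(G)+1)$.
   Context: For disjoint vertex sets $S,T$, $E(S,T)$ is the set of edges with one end in $S$ and one in $T$. An $(s,t)$-bipartite-hole in a graph $F$ consists of two disjoint sets of vertices $S,T$ with $|S|=s$, $|T|=t$ and $E(S,T)=\emptyset$. The bipartite-hole-number $\widetilde{\alpha}(F)$ is the least integer $r'$ which can be written as $r'=s+t-1$ for some positive integers $s,t$ such that $F$ contains no $(s,t)$-bipartite-hole. *)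

theory Defs
  imports Main
begin

definition simple_graph :: "'a set \<Rightarrow> 'a set set \<Rightarrow> bool" where
  "simple_graph V E \<longleftrightarrow> finite V \<and> (\<forall>e\<in>E. e \<subseteq> V \<and> card e = 2)"

definition cycle_edges :: "'a list \<Rightarrow> 'a set set" where
  "cycle_edges xs = {{xs ! i, xs ! (Suc i mod length xs)} | i. i < length xs}"

definition is_ham_cycle :: "'a set \<Rightarrow> 'a set set \<Rightarrow> 'a list \<Rightarrow> bool" where
  "is_ham_cycle V E xs \<longleftrightarrow> distinct xs \<and> set xs = V \<and> length xs \<ge> 3 \<and> cycle_edges xs \<subseteq> E"

definition has_bip_hole :: "'a set \<Rightarrow> 'a set set \<Rightarrow> nat \<Rightarrow> nat \<Rightarrow> bool" where
  "has_bip_hole V E s t \<longleftrightarrow> (\<exists>S T. S \<subseteq> V \<and> T \<subseteq> V \<and> S \<inter> T = {} \<and> card S = s \<and> card T = t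
      \<and> (\<forall>x\<in>S. \<forall>y\<in>T. {x, y} \<notin> E))"

definition bhn :: "'a set \<Rightarrow> 'a set set \<Rightarrow> nat" where
  "bhn V E = (LEAST r. \<exists>s t. 0 < s \<and> 0 < t \<and> r = s + t - 1 \<and> \<not> has_bip_hole V E s t)"

end

theory Submission
  imports Defs
begin

text \<open>The union H of r Hamilton cycles has maximum degree at most 2r. If G has no (s,t)-hole
  with s \<le> t, then G - H has no (s, t + 2rs)-hole: deleting from T the at most 2rs H-neighbours
  of S would leave an (s,t)-hole of G. Since s + t + 2rs \<le> (r+1)(s+t), the bound follows.\<close>

definition nbhd :: "'a set set \<Rightarrow> 'a \<Rightarrow> 'a set" where
  "nbhd F x = {y. {x, y} \<in> F}"

lemma nbhd_UN: "nbhd (\<Union>i\<in>I. F i) x = (\<Union>i\<in>I. nbhd (F i) x)"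
  unfolding nbhd_def by blast

lemma card_UN_le_mult:
  assumes "finite I" and "\<And>i. i \<in> I \<Longrightarrow> card (A i) \<le> d"
  shows "card (\<Union>i\<in>I. A i) \<le> d * card I"
proof -
  have "card (\<Union>i\<in>I. A i) \<le> (\<Sum>i\<in>I. card (A i))" using assms(1) by (rule card_UN_le)
  also have "\<dots> \<le> (\<Sum>i\<in>I. d)" using assms(2) by (rule sum_mono)
  finally show ?thesis by (simp add: mult.commute)
qed

lemma card_index_set_le_1:
  fixes n :: nat
  assumes "inj_on f {..<n}"
  shows "card {j. j < n \<and> f j = x} \<le> 1"
  unfolding One_nat_def using assms
  by (intro card_le_Suc0_iff_eq[THEN iffD2]) (auto simp: inj_on_def)

lemma inj_on_Suc_mod: "inj_on (\<lambda>j. Suc j mod n) {..<n}"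
  by (auto simp: inj_on_def mod_Suc split: if_splits)

lemma nbhd_cycle_edges_subset:
  "nbhd (cycle_edges xs) x \<subseteq>
     (\<lambda>j. xs ! (Suc j mod length xs)) ` {j. j < length xs \<and> xs ! j = x}
     \<union> (\<lambda>j. xs ! j) ` {j. j < length xs \<and> xs ! (Suc j mod length xs) = x}"
  unfolding nbhd_def cycle_edges_def by (auto simp: doubleton_eq_iff)

lemma card_nbhd_cycle_edges_le_2:
  assumes "distinct xs"
  shows "finite (nbhd (cycle_edges xs) x) \<and> card (nbhd (cycle_edges xs) x) \<le> 2"
proof -
  let ?n = "length xs"
  let ?A = "{j. j < ?n \<and> xs ! j = x}"
  let ?B = "{j. j < ?n \<and> xs ! (Suc j mod ?n) = x}"
  have inj: "inj_on (\<lambda>j. xs ! j) {..<?n}"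
    using assms by (auto simp: inj_on_def nth_eq_iff_index_eq)
  have inj_succ: "inj_on (\<lambda>j. xs ! (Suc j mod ?n)) {..<?n}"
  proof (rule comp_inj_on[OF inj_on_Suc_mod, of _ ?n, unfolded o_def])
    show "inj_on (\<lambda>j. xs ! j) ((\<lambda>j. Suc j mod ?n) ` {..<?n})"
      by (rule inj_on_subset[OF inj]) (auto intro: mod_less_divisor)
  qed
  have "card (nbhd (cycle_edges xs) x)
      \<le> card ((\<lambda>j. xs ! (Suc j mod ?n)) ` ?A \<union> (\<lambda>j. xs ! j) ` ?B)"
    by (rule card_mono[OF _ nbhd_cycle_edges_subset]) simp
  also have "\<dots> \<le> card ?A + card ?B"
    by (rule order.trans[OF card_Un_le add_mono[OF card_image_le card_image_le]]) simp_all
  also have "\<dots> \<le> 2"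
    using card_index_set_le_1[OF inj, of x] card_index_set_le_1[OF inj_succ, of x] by linarith
  finally show ?thesis
    using finite_subset[OF nbhd_cycle_edges_subset] by auto
qed

lemma has_bip_hole_commute: "has_bip_hole V E s t \<longleftrightarrow> has_bip_hole V E t s"
  unfolding has_bip_hole_def by (rule iffI; metis inf_commute insert_commute)

lemma bhn_le:
  assumes "0 < s" "0 < t" "\<not> has_bip_hole V E s t"
  shows "bhn V E \<le> s + t - 1"
  unfolding bhn_def using assms by (intro Least_le) blast

lemma not_has_bip_hole_card_gt:
  assumes "finite V" "card V < s"
  shows "\<not> has_bip_hole V E s t"
  using assms card_mono[OF assms(1)] unfolding has_bip_hole_def by (meson leD)

lemma bhn_witness:
  assumes "finite V"
  obtains s t where "0 < s" "0 < t" "bhn V E = s + t - 1" "\<not> has_bip_hole V E s t"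
proof -
  have "\<exists>s t. 0 < s \<and> 0 < t \<and> card V + 1 = s + t - 1 \<and> \<not> has_bip_hole V E s t"
    using not_has_bip_hole_card_gt[OF assms, of "card V + 1" E 1]
    by (intro exI[of _ "card V + 1"] exI[of _ 1]) simp
  then have "\<exists>s t. 0 < s \<and> 0 < t \<and> bhn V E = s + t - 1 \<and> \<not> has_bip_hole V E s t"
    unfolding bhn_def by (rule LeastI)
  then show ?thesis using that by blast
qed

lemma not_has_bip_hole_Diff:
  assumes "finite V" and no_hole: "\<not> has_bip_hole V E s t"
    and fin_nbhd: "\<And>x. finite (nbhd H x)" and deg: "\<And>x. card (nbhd H x) \<le> d"
  shows "\<not> has_bip_hole V (E - H) s (t + d * s)"
proof
  assume "has_bip_hole V (E - H) s (t + d * s)"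
  then obtain S T where ST: "S \<subseteq> V" "T \<subseteq> V" "S \<inter> T = {}" "card S = s" "card T = t + d * s"
    and no_edge: "\<forall>x\<in>S. \<forall>y\<in>T. {x, y} \<notin> E - H"
    unfolding has_bip_hole_def by blast
  have fin: "finite S" "finite T" using ST(1,2) \<open>finite V\<close> finite_subset by auto
  let ?M = "\<Union>x\<in>S. nbhd H x"
  have "card ?M \<le> d * s" using card_UN_le_mult[OF fin(1) deg] ST(4) by simp
  moreover have "card T - card ?M \<le> card (T - ?M)"
    using fin(1) fin_nbhd by (intro diff_card_le_card_Diff) auto
  ultimately have "t \<le> card (T - ?M)" using ST(5) by linarith
  then obtain T' where T': "T' \<subseteq> T - ?M" "card T' = t" by (meson obtain_subset_with_card_n)
  have "\<forall>x\<in>S. \<forall>y\<in>T'. {x, y} \<notin> E"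
    using no_edge T' unfolding nbhd_def by blast
  moreover have "T' \<subseteq> V" "S \<inter> T' = {}" using ST T' by auto
  ultimately have "has_bip_hole V E s t"
    unfolding has_bip_hole_def using ST(1,4) T'(2) by blast
  with no_hole show False ..
qed

lemma bhn_Diff_le:
  assumes "finite V" and fin_nbhd: "\<And>x. finite (nbhd H x)" and deg: "\<And>x. card (nbhd H x) \<le> 2 * r"
  shows "bhn V (E - H) + 1 \<le> (r + 1) * (bhn V E + 1)"
proof -
  obtain s t where st: "0 < s" "0 < t" "bhn V E = s + t - 1" "\<not> has_bip_hole V E s t"
    using bhn_witness[OF \<open>finite V\<close>] .
  have "\<exists>s' t'. 0 < s' \<and> 0 < t' \<and> s' + t' \<le> (r + 1) * (s + t) \<and> \<not> has_bip_hole V (E - H) s' t'"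
  proof (cases "s \<le> t")
    case True
    have "\<not> has_bip_hole V (E - H) s (t + 2 * r * s)"
      using not_has_bip_hole_Diff[OF \<open>finite V\<close> st(4) fin_nbhd deg] .
    moreover have "s + (t + 2 * r * s) \<le> (r + 1) * (s + t)"
      using mult_left_mono[OF True, of r] by (simp add: algebra_simps)
    ultimately show ?thesis using st(1,2) by blast
  next
    case False
    have "\<not> has_bip_hole V E t s" using st(4) has_bip_hole_commute by blast
    then have "\<not> has_bip_hole V (E - H) (s + 2 * r * t) t"
      using not_has_bip_hole_Diff[OF \<open>finite V\<close> _ fin_nbhd deg] has_bip_hole_commute by blast
    moreover have "(s + 2 * r * t) + t \<le> (r + 1) * (s + t)"
      using mult_left_mono[of t s r] False by (simp add: algebra_simps)
    ultimately show ?thesis using st(1,2) by blast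
  qed
  then obtain s' t' where "0 < s'" "0 < t'" "s' + t' \<le> (r + 1) * (s + t)"
    "\<not> has_bip_hole V (E - H) s' t'" by blast
  then show ?thesis using bhn_le[of s' t' V "E - H"] st(1-3) by simp
qed

theorem lemma10:
  fixes V :: "'a set" and E :: "'a set set" and r :: nat and C :: "nat \<Rightarrow> 'a list"
  assumes "simple_graph V E"
    and "r \<ge> 1"
    and "\<forall>i<r. is_ham_cycle V E (C i)"
  shows "bhn V (E - (\<Union>i<r. cycle_edges (C i))) + 1 \<le> (r + 1) * (bhn V E + 1)"
proof (rule bhn_Diff_le)
  show "finite V" using assms(1) unfolding simple_graph_def by simp
  fix x
  have cycle_deg: "finite (nbhd (cycle_edges (C i)) x) \<and> card (nbhd (cycle_edges (C i)) x) \<le> 2"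
    if "i < r" for i
    using assms(3) that by (intro card_nbhd_cycle_edges_le_2) (simp add: is_ham_cycle_def)
  show "finite (nbhd (\<Union>i<r. cycle_edges (C i)) x)"
    using cycle_deg by (simp add: nbhd_UN)
  show "card (nbhd (\<Union>i<r. cycle_edges (C i)) x) \<le> 2 * r"
    using card_UN_le_mult[of "{..<r}" "\<lambda>i. nbhd (cycle_edges (C i)) x" 2] cycle_deg
    by (simp add: nbhd_UN)
qed

end
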